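(* Let $n\ge 4$ be even and consider the $[\![n,n-2,2]\!]$ code. Let $G = \tfrac{i}{\sqrt2}(X+Y)$. Let $V = G^{\otimes n}$ if $n \equiv 0 \pmod 4$ and $V = Z_n G^{\otimes n}$ if $n\equiv 2 \pmod 4$. Then $V$ preserves the code space, and, up to a logical Pauli operator and a global phase, acts on the code space as the product of logical $\mathrm{CZ}$ gates between every pair of distinct encoded qubits, $\prod_{1\le i<j\le n-2}\overline{\mathrm{CZ}}_{i,j}$.
   Context: For even $n$, the $[\![n,n-2,2]\!]$ code is the stabilizer code on $n$ qubits with stabilizer generators $X^{\otimes n}$ and $Z^{\otimes n}$, with logical operators $\bar X_j = X_1X_{j+1}$ and $\bar Z_j = Z_{j+1}Z_n$ for $j=1,\dots,n-2$. $\mathrm{CZ} = \mathbb 1 - 2|11\rangle\langle11|$. *)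

theory Defs
  imports Complex_Main
begin

text \<open>Computational basis states of n qubits are
  bit lists of length n (entry k is qubit k+1 of the paper, i.e. qubits are
  numbered 0..n-1 here). A state is a function from bit lists to amplitudes
  (required to vanish off length-n lists); an operator is a matrix indexed by
  bit lists.\<close>

type_synonym gate1 = "bool \<Rightarrow> bool \<Rightarrow> complex"
type_synonym qop = "bool list \<Rightarrow> bool list \<Rightarrow> complex"
type_synonym qstate = "bool list \<Rightarrow> complex"

definition bits :: "nat \<Rightarrow> bool list set" where
  "bits n = {xs. length xs = n}"

text \<open>Single-qubit Paulis, matrix entries indexed (row, column), False = 0, True = 1.\<close>
definition pI :: gate1 where "pI a b = (if a = b then 1 else 0)"
definition pX :: gate1 where "pX a b = (if a \<noteq> b then 1 else 0)"
definition pY :: gate1 where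
  "pY a b = (if a = b then 0 else if a then \<i> else - \<i>)"
definition pZ :: gate1 where "pZ a b = (if a = b then (if a then -1 else 1) else 0)"

definition gateG :: gate1 where
  "gateG a b = (\<i> / complex_of_real (sqrt 2)) * (pX a b + pY a b)"

definition tensor :: "nat \<Rightarrow> (nat \<Rightarrow> gate1) \<Rightarrow> qop" where
  "tensor n g = (\<lambda>xs ys. \<Prod>k<n. g k (xs ! k) (ys ! k))"

definition on_qubit :: "nat \<Rightarrow> nat \<Rightarrow> gate1 \<Rightarrow> qop" where
  "on_qubit n k g = tensor n (\<lambda>l. if l = k then g else pI)"

definition ident :: "nat \<Rightarrow> qop" where
  "ident n = tensor n (\<lambda>_. pI)"

definition mmul :: "nat \<Rightarrow> qop \<Rightarrow> qop \<Rightarrow> qop" where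
  "mmul n A B = (\<lambda>xs zs. \<Sum>ys\<in>bits n. A xs ys * B ys zs)"

definition madd :: "qop \<Rightarrow> qop \<Rightarrow> qop" where
  "madd A B = (\<lambda>xs ys. A xs ys + B xs ys)"

definition mscale :: "complex \<Rightarrow> qop \<Rightarrow> qop" where
  "mscale c A = (\<lambda>xs ys. c * A xs ys)"

definition app :: "nat \<Rightarrow> qop \<Rightarrow> qstate \<Rightarrow> qstate" where
  "app n A \<psi> = (\<lambda>xs. if length xs = n then \<Sum>ys\<in>bits n. A xs ys * \<psi> ys else 0)"

text \<open>Product of a list of operators (in list order, leftmost applied last).\<close>
definition mprod_list :: "nat \<Rightarrow> qop list \<Rightarrow> qop" where
  "mprod_list n As = foldr (mmul n) As (ident n)"

definition code_space :: "nat \<Rightarrow> qstate set" where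
  "code_space n = {\<psi>. (\<forall>xs. length xs \<noteq> n \<longrightarrow> \<psi> xs = 0)
      \<and> app n (tensor n (\<lambda>_. pX)) \<psi> = \<psi> \<and> app n (tensor n (\<lambda>_. pZ)) \<psi> = \<psi>}"

text \<open>Logical operators, j = 1..n-2: Xbar_j = X_1 X_{j+1}, Zbar_j = Z_{j+1} Z_n
  (paper's 1-based qubits 1, j+1, n are indices 0, j, n-1 here).\<close>
definition logX :: "nat \<Rightarrow> nat \<Rightarrow> qop" where
  "logX n j = tensor n (\<lambda>k. if k = 0 \<or> k = j then pX else pI)"
definition logZ :: "nat \<Rightarrow> nat \<Rightarrow> qop" where
  "logZ n j = tensor n (\<lambda>k. if k = j \<or> k = n - 1 then pZ else pI)"

text \<open>Logical Pauli operators: the group generated by the Xbar_j, Zbar_j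
  (global phases are accounted for separately).\<close>
inductive_set logical_paulis :: "nat \<Rightarrow> qop set" for n where
  lp_id: "ident n \<in> logical_paulis n"
| lp_X: "\<lbrakk>P \<in> logical_paulis n; 1 \<le> j; j \<le> n - 2\<rbrakk> \<Longrightarrow> mmul n (logX n j) P \<in> logical_paulis n"
| lp_Z: "\<lbrakk>P \<in> logical_paulis n; 1 \<le> j; j \<le> n - 2\<rbrakk> \<Longrightarrow> mmul n (logZ n j) P \<in> logical_paulis n"

text \<open>Logical CZ between encoded qubits i and j: CZ = 1 - 2|11><11|, where the
  logical projector onto |1> of encoded qubit j is (1 - Zbar_j)/2.\<close>
definition logProj1 :: "nat \<Rightarrow> nat \<Rightarrow> qop" where
  "logProj1 n j = mscale (1/2) (madd (ident n) (mscale (-1) (logZ n j)))"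

definition logCZ :: "nat \<Rightarrow> nat \<Rightarrow> nat \<Rightarrow> qop" where
  "logCZ n i j = madd (ident n) (mscale (-2) (mmul n (logProj1 n i) (logProj1 n j)))"

text \<open>Product of logical CZ over all pairs 1 \<le> i < j \<le> n-2 (these commute).\<close>
definition allLogCZ :: "nat \<Rightarrow> qop" where
  "allLogCZ n = mprod_list n [logCZ n i j. i \<leftarrow> [1..<n-1], j \<leftarrow> [Suc i..<n-1]]"

definition opV :: "nat \<Rightarrow> qop" where
  "opV n = (if n mod 4 = 0 then tensor n (\<lambda>_. gateG)
            else mmul n (on_qubit n (n - 1) pZ) (tensor n (\<lambda>_. gateG)))"

end

theory Submission
  imports Defs
begin

text \<open>Code states are supported on even-weight basis states and are invariant under flipping
  all bits. The transversal G flips every bit with amplitude \<omega>^n i^|x|, and the X stabilizer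
  undoes the flip, so V acts on the code space as a diagonal phase. If m encoded qubits are in
  state 1 (bits 1..n-2 that differ from bit n-1), this phase, including the Z correction when
  n = 2 mod 4, is i^(m + m mod 2) = (-1)^(m+1 choose 2) = (-1)^m (-1)^(m choose 2): the second
  factor is the product of all logical CZs, the first the logical Pauli Zbar_1 ... Zbar_(n-2).
  A phase that is invariant under the global flip preserves the code space.\<close>


section \<open>Operator algebra on bit lists\<close>

lemma finite_bits [simp]: "finite (bits n)"
  unfolding bits_def by (rule finite_list_length)

lemma mem_bits_iff [simp]: "xs \<in> bits n \<longleftrightarrow> length xs = n"
  by (simp add: bits_def)

lemma sum_bits_single:
  assumes "length zs = n" and "\<And>ys. length ys = n \<Longrightarrow> ys \<noteq> zs \<Longrightarrow> f ys = 0"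
  shows "(\<Sum>ys\<in>bits n. f ys) = f zs"
  using assms by (subst sum.remove[of _ zs]) (auto intro!: sum.neutral)

lemma app_length_neq [simp]: "length xs \<noteq> n \<Longrightarrow> app n A \<psi> xs = 0"
  by (simp add: app_def)

lemma app_single_entry:
  assumes "length xs = n" "length zs = n"
    and "\<And>ys. length ys = n \<Longrightarrow> ys \<noteq> zs \<Longrightarrow> A xs ys = 0"
  shows "app n A \<psi> xs = A xs zs * \<psi> zs"
  using assms by (simp add: app_def sum_bits_single)

definition diagonal_op :: "nat \<Rightarrow> qop \<Rightarrow> bool" where
  "diagonal_op n A \<longleftrightarrow>
     (\<forall>xs ys. length xs = n \<longrightarrow> length ys = n \<longrightarrow> xs \<noteq> ys \<longrightarrow> A xs ys = 0)"

lemma app_diagonal_op: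
  "diagonal_op n A \<Longrightarrow> length xs = n \<Longrightarrow> app n A \<psi> xs = A xs xs * \<psi> xs"
  by (rule app_single_entry) (auto simp: diagonal_op_def)

lemma mmul_diagonal_op:
  assumes "diagonal_op n A" "length xs = n"
  shows "mmul n A B xs zs = A xs xs * B xs zs"
  unfolding mmul_def using assms by (subst sum_bits_single[of xs]) (auto simp: diagonal_op_def)

lemma app_mmul_diagonal_op:
  assumes "diagonal_op n A" "length xs = n"
  shows "app n (mmul n A B) \<psi> xs = A xs xs * app n B \<psi> xs"
  using assms by (simp add: app_def mmul_diagonal_op sum_distrib_left mult.assoc)

lemma diagonal_op_mmul: "diagonal_op n A \<Longrightarrow> diagonal_op n B \<Longrightarrow> diagonal_op n (mmul n A B)"
  by (auto simp: diagonal_op_def mmul_diagonal_op)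

lemma diagonal_op_madd: "diagonal_op n A \<Longrightarrow> diagonal_op n B \<Longrightarrow> diagonal_op n (madd A B)"
  by (auto simp: diagonal_op_def madd_def)

lemma diagonal_op_mscale: "diagonal_op n A \<Longrightarrow> diagonal_op n (mscale c A)"
  by (auto simp: diagonal_op_def mscale_def)

lemma tensor_eq_0: "k < n \<Longrightarrow> g k (xs ! k) (ys ! k) = 0 \<Longrightarrow> tensor n g xs ys = 0"
  unfolding tensor_def by (rule prod_zero) auto

lemma diagonal_op_tensor:
  assumes "\<And>k a b. k < n \<Longrightarrow> a \<noteq> b \<Longrightarrow> g k a b = 0"
  shows "diagonal_op n (tensor n g)"
  unfolding diagonal_op_def
proof (intro allI impI)
  fix xs ys :: "bool list"
  assume "length xs = n" "length ys = n" "xs \<noteq> ys"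
  then obtain k where "k < n" "xs ! k \<noteq> ys ! k"
    by (auto simp: list_eq_iff_nth_eq)
  then show "tensor n g xs ys = 0"
    by (intro tensor_eq_0 assms)
qed

lemma app_tensor_antidiagonal:
  assumes "\<And>k a. k < n \<Longrightarrow> g k a a = 0" and "length xs = n"
  shows "app n (tensor n g) \<psi> xs = (\<Prod>k<n. g k (xs ! k) (\<not> xs ! k)) * \<psi> (map Not xs)"
proof (subst app_single_entry[OF assms(2), of "map Not xs"])
  fix ys :: "bool list"
  assume "length ys = n" "ys \<noteq> map Not xs"
  then obtain k where "k < n" "ys ! k = xs ! k"
    using assms(2) by (auto simp: list_eq_iff_nth_eq)
  then show "tensor n g xs ys = 0"
    by (intro tensor_eq_0) (auto simp: assms(1))
qed (use assms(2) in \<open>simp_all add: tensor_def\<close>)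

lemma pI_simps [simp]: "pI a a = 1" "a \<noteq> b \<Longrightarrow> pI a b = 0"
  by (auto simp: pI_def)

lemma pZ_simps [simp]: "pZ a a = (if a then -1 else 1)" "a \<noteq> b \<Longrightarrow> pZ a b = 0"
  by (auto simp: pZ_def)

lemma ident_diagonal_entry [simp]: "ident n xs xs = 1"
  by (simp add: ident_def tensor_def)

lemma diagonal_op_ident: "diagonal_op n (ident n)"
  unfolding ident_def by (rule diagonal_op_tensor) simp

lemma diagonal_op_mprod_list:
  "\<forall>A\<in>set As. diagonal_op n A \<Longrightarrow> diagonal_op n (mprod_list n As)"
  by (induction As) (auto simp: mprod_list_def diagonal_op_ident diagonal_op_mmul)

lemma mprod_list_diagonal_entry:
  assumes "\<forall>A\<in>set As. diagonal_op n A" "length xs = n"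
  shows "mprod_list n As xs xs = (\<Prod>A\<leftarrow>As. A xs xs)"
  using assms
proof (induction As)
  case (Cons A As)
  then show ?case
    using mmul_diagonal_op[of n A xs "mprod_list n As" xs] by (simp add: mprod_list_def)
qed (simp add: mprod_list_def)

lemma prod_list_concat: "prod_list (concat xss) = (\<Prod>xs\<leftarrow>xss. prod_list xs)"
  by (induction xss) simp_all

lemma prod_list_upt: "(\<Prod>i\<leftarrow>[a..<b]. f i) = (\<Prod>i\<in>{a..<b}. f i)"
  by (metis distinct_upt prod.distinct_set_conv_list set_upt)

lemma prod_if_eq_power_card:
  "finite A \<Longrightarrow> (\<Prod>k\<in>A. if P k then c else 1) = c ^ card {k\<in>A. P k}"
  by (simp add: prod.inter_filter[symmetric])


section \<open>Transversal Paulis and the code space\<close>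

definition weight :: "nat \<Rightarrow> bool list \<Rightarrow> nat" where
  "weight n xs = card {k\<in>{..<n}. xs ! k}"

lemma app_tensor_pX: "length xs = n \<Longrightarrow> app n (tensor n (\<lambda>_. pX)) \<psi> xs = \<psi> (map Not xs)"
  by (subst app_tensor_antidiagonal) (auto simp: pX_def)

lemma app_tensor_pZ:
  "length xs = n \<Longrightarrow> app n (tensor n (\<lambda>_. pZ)) \<psi> xs = (-1) ^ weight n xs * \<psi> xs"
  using diagonal_op_tensor[of n "\<lambda>_. pZ"]
  by (simp add: app_diagonal_op tensor_def weight_def prod_if_eq_power_card)

lemma code_space_iff:
  "\<psi> \<in> code_space n \<longleftrightarrow>
     (\<forall>xs. length xs \<noteq> n \<longrightarrow> \<psi> xs = 0) \<and>
     (\<forall>xs. length xs = n \<longrightarrow>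
        \<psi> (map Not xs) = \<psi> xs \<and> (odd (weight n xs) \<longrightarrow> \<psi> xs = 0))"
    (is "_ \<longleftrightarrow> ?supp \<and> _")
proof -
  have "app n (tensor n (\<lambda>_. pX)) \<psi> xs = \<psi> xs
          \<longleftrightarrow> (length xs = n \<longrightarrow> \<psi> (map Not xs) = \<psi> xs)"
    and "app n (tensor n (\<lambda>_. pZ)) \<psi> xs = \<psi> xs
          \<longleftrightarrow> (length xs = n \<longrightarrow> odd (weight n xs) \<longrightarrow> \<psi> xs = 0)"
    if ?supp for xs
    using that
    by (cases "length xs = n"; simp add: app_tensor_pX app_tensor_pZ minus_one_power_iff)+
  then show ?thesis
    by (auto simp: code_space_def fun_eq_iff)
qed

lemma code_space_flip_invariant_scaling:
  assumes "\<psi> \<in> code_space n"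
    and "\<And>xs. length xs = n \<Longrightarrow> \<phi> xs = f xs * \<psi> xs"
    and "\<And>xs. length xs \<noteq> n \<Longrightarrow> \<phi> xs = 0"
    and "\<And>xs. length xs = n \<Longrightarrow> f (map Not xs) = f xs"
  shows "\<phi> \<in> code_space n"
  using assms by (auto simp: code_space_iff)


section \<open>Logical Z and CZ operators\<close>

text \<open>Zbar_j = Z_j Z_(n-1) is -1 on a basis state exactly when bits j and n-1 differ,
  so this counts the encoded qubits in state 1.\<close>

definition logical_weight :: "nat \<Rightarrow> bool list \<Rightarrow> nat" where
  "logical_weight n xs = card {k\<in>{1..<n-1}. xs ! k \<noteq> xs ! (n-1)}"

lemma logical_weight_map_Not:
  "length xs = n \<Longrightarrow> logical_weight n (map Not xs) = logical_weight n xs"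
  unfolding logical_weight_def by (intro arg_cong[where f = card]) auto

lemma diagonal_op_logZ: "diagonal_op n (logZ n j)"
  unfolding logZ_def by (rule diagonal_op_tensor) auto

lemma logZ_diagonal_entry:
  assumes "j < n - 1" "length xs = n"
  shows "logZ n j xs xs = (if xs ! j \<noteq> xs ! (n-1) then -1 else 1)"
proof -
  have "logZ n j xs xs = (\<Prod>k<n. (if k = j then pZ (xs ! j) (xs ! j) else 1)
                                * (if k = n - 1 then pZ (xs ! (n-1)) (xs ! (n-1)) else 1))"
    unfolding logZ_def tensor_def using assms(1) by (intro prod.cong) auto
  also have "\<dots> = (if xs ! j \<noteq> xs ! (n-1) then -1 else 1)"
  proof -
    have "j < n" "n - 1 < n" using assms(1) by auto
    then show ?thesis by (simp add: prod.distrib)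
  qed
  finally show ?thesis .
qed

lemma diagonal_op_logProj1: "diagonal_op n (logProj1 n j)"
  unfolding logProj1_def
  by (intro diagonal_op_madd diagonal_op_mscale diagonal_op_ident diagonal_op_logZ)

lemma logProj1_diagonal_entry:
  assumes "j < n - 1" "length xs = n"
  shows "logProj1 n j xs xs = (if xs ! j \<noteq> xs ! (n-1) then 1 else 0)"
  using assms by (simp add: logProj1_def madd_def mscale_def logZ_diagonal_entry)

lemma diagonal_op_logCZ: "diagonal_op n (logCZ n i j)"
  unfolding logCZ_def
  by (intro diagonal_op_madd diagonal_op_mscale diagonal_op_mmul diagonal_op_ident diagonal_op_logProj1)

lemma logCZ_diagonal_entry:
  assumes "i < n - 1" "j < n - 1" "length xs = n"
  shows "logCZ n i j xs xs = (if xs ! i \<noteq> xs ! (n-1) \<and> xs ! j \<noteq> xs ! (n-1) then -1 else 1)"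
  using assms
  by (simp add: logCZ_def madd_def mscale_def mmul_diagonal_op diagonal_op_logProj1
      logProj1_diagonal_entry)

lemma Suc_choose_two: "Suc m choose 2 = (m choose 2) + m"
  by (simp add: numeral_2_eq_2 choose_one)

lemma prod_pairs_sign:
  "(\<Prod>i\<in>{l..<h}. \<Prod>j\<in>{Suc i..<h}. if P i \<and> P j then -1 else 1 :: 'a :: comm_ring_1)
     = (-1) ^ (card {k\<in>{l..<h}. P k} choose 2)"
proof (induction h)
  case (Suc h)
  show ?case
  proof (cases "l \<le> h")
    case True
    let ?c = "card {k\<in>{l..<h}. P k}"
    have "(\<Prod>i\<in>{l..<Suc h}. \<Prod>j\<in>{Suc i..<Suc h}. if P i \<and> P j then -1 else 1 :: 'a)
          = (\<Prod>i\<in>{l..<h}. if P i \<and> P h then -1 else 1) * (-1) ^ (?c choose 2)"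
      using True by (simp add: prod.distrib Suc.IH)
    also have "\<dots> = (-1) ^ (card {k\<in>{l..<Suc h}. P k} choose 2)"
    proof (cases "P h")
      case True
      then have "{k\<in>{l..<Suc h}. P k} = insert h {k\<in>{l..<h}. P k}"
        using \<open>l \<le> h\<close> by auto
      then show ?thesis
        using True by (simp add: prod_if_eq_power_card Suc_choose_two power_add)
    next
      case False
      then have "{k\<in>{l..<Suc h}. P k} = {k\<in>{l..<h}. P k}"
        by (auto simp: less_Suc_eq)
      then show ?thesis
        using False by simp
    qed
    finally show ?thesis .
  qed (simp add: numeral_2_eq_2)
qed (simp add: numeral_2_eq_2)

lemma diagonal_op_allLogCZ: "diagonal_op n (allLogCZ n)"
  unfolding allLogCZ_def by (rule diagonal_op_mprod_list) (auto simp: diagonal_op_logCZ)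

lemma allLogCZ_diagonal_entry:
  assumes "length xs = n"
  shows "allLogCZ n xs xs = (-1) ^ (logical_weight n xs choose 2)"
proof -
  have "allLogCZ n xs xs = (\<Prod>i\<in>{1..<n-1}. \<Prod>j\<in>{Suc i..<n-1}. logCZ n i j xs xs)"
    unfolding allLogCZ_def
    using assms
    by (simp add: mprod_list_diagonal_entry diagonal_op_logCZ map_concat prod_list_concat o_def
        prod_list_upt)
  also have "\<dots> = (\<Prod>i\<in>{1..<n-1}. \<Prod>j\<in>{Suc i..<n-1}.
      if xs ! i \<noteq> xs ! (n-1) \<and> xs ! j \<noteq> xs ! (n-1) then -1 else 1)"
    using assms by (intro prod.cong refl) (simp add: logCZ_diagonal_entry)
  also have "\<dots> = (-1) ^ (logical_weight n xs choose 2)"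
    unfolding logical_weight_def by (rule prod_pairs_sign)
  finally show ?thesis .
qed

definition allLogZ :: "nat \<Rightarrow> qop" where
  "allLogZ n = mprod_list n (map (logZ n) [1..<n-1])"

lemma mprod_list_logZ_in_logical_paulis:
  "set js \<subseteq> {1..n-2} \<Longrightarrow> mprod_list n (map (logZ n) js) \<in> logical_paulis n"
  by (induction js) (auto simp: mprod_list_def intro: logical_paulis.intros)

lemma allLogZ_in_logical_paulis: "allLogZ n \<in> logical_paulis n"
  unfolding allLogZ_def by (rule mprod_list_logZ_in_logical_paulis) auto

lemma diagonal_op_allLogZ: "diagonal_op n (allLogZ n)"
  unfolding allLogZ_def by (rule diagonal_op_mprod_list) (auto simp: diagonal_op_logZ)

lemma allLogZ_diagonal_entry:
  assumes "length xs = n"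
  shows "allLogZ n xs xs = (-1) ^ logical_weight n xs"
  using assms
  by (simp add: allLogZ_def mprod_list_diagonal_entry diagonal_op_logZ o_def prod_list_upt
      logZ_diagonal_entry prod_if_eq_power_card logical_weight_def)

lemma app_allLogZ_allLogCZ:
  assumes "length xs = n"
  shows "app n (mmul n (allLogZ n) (allLogCZ n)) \<psi> xs
           = (-1) ^ (Suc (logical_weight n xs) choose 2) * \<psi> xs"
  using assms
  by (simp add: app_mmul_diagonal_op diagonal_op_allLogZ allLogZ_diagonal_entry
      app_diagonal_op diagonal_op_allLogCZ allLogCZ_diagonal_entry Suc_choose_two power_add)


section \<open>The transversal operator\<close>

definition \<omega> :: complex where
  "\<omega> = (1 + \<i>) / sqrt 2"

lemma norm_\<omega> [simp]: "cmod \<omega> = 1"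
proof -
  have "cmod (1 + \<i>) = sqrt 2"
    by (simp add: cmod_def)
  then show ?thesis
    by (simp add: \<omega>_def norm_divide)
qed

lemma gateG_diagonal [simp]: "gateG a a = 0"
  by (simp add: gateG_def pX_def pY_def)

lemma gateG_flip: "gateG a (\<not> a) = \<omega> * (if a then \<i> else 1)"
  by (cases a) (auto simp: gateG_def pX_def pY_def \<omega>_def field_simps)

lemma app_tensor_gateG:
  assumes "length xs = n"
  shows "app n (tensor n (\<lambda>_. gateG)) \<psi> xs = \<omega> ^ n * \<i> ^ weight n xs * \<psi> (map Not xs)"
  using assms
  by (simp add: app_tensor_antidiagonal gateG_flip prod.distrib prod_if_eq_power_card weight_def)

lemma diagonal_op_on_qubit_pZ: "diagonal_op n (on_qubit n k pZ)"
  unfolding on_qubit_def by (rule diagonal_op_tensor) auto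

lemma on_qubit_pZ_diagonal_entry:
  "k < n \<Longrightarrow> on_qubit n k pZ xs xs = (if xs ! k then -1 else 1)"
  unfolding on_qubit_def tensor_def by (simp add: if_distrib[of "\<lambda>g. g _ _"] prod.delta cong: if_cong)

lemma i_power_round_up_even: "\<i> ^ (m + m mod 2) = (-1) ^ (Suc m choose 2)"
proof (induction m rule: nat_induct2)
  fix m
  assume IH: "\<i> ^ (m + m mod 2) = (-1) ^ (Suc m choose 2)"
  have "m + 2 + (m + 2) mod 2 = (m + m mod 2) + 2"
    by simp
  moreover have "Suc (m + 2) choose 2 = (Suc m choose 2) + 2 * m + 3"
    by (simp add: Suc_choose_two)
  ultimately show "\<i> ^ (m + 2 + (m + 2) mod 2) = (-1) ^ (Suc (m + 2) choose 2)"
    using IH by (simp add: power_add)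
qed (simp_all add: numeral_2_eq_2)

lemma weight_via_last_bit:
  assumes "0 < n"
  shows "weight n xs = (if xs ! (n-1) then n - card {k\<in>{..<n-1}. xs ! k \<noteq> xs ! (n-1)}
                        else card {k\<in>{..<n-1}. xs ! k \<noteq> xs ! (n-1)})"
proof -
  have below_n: "k < n \<longleftrightarrow> k < n - 1 \<or> k = n - 1" for k
    using assms by linarith
  show ?thesis
  proof (cases "xs ! (n-1)")
    case True
    then have "{k\<in>{..<n}. xs ! k} = {..<n} - {k\<in>{..<n-1}. xs ! k \<noteq> xs ! (n-1)}"
      using below_n by blast
    moreover have "card ({..<n} - {k\<in>{..<n-1}. xs ! k \<noteq> xs ! (n-1)})
                   = n - card {k\<in>{..<n-1}. xs ! k \<noteq> xs ! (n-1)}"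
      by (subst card_Diff_subset) auto
    ultimately show ?thesis
      using True by (simp add: weight_def)
  next
    case False
    then have "{k\<in>{..<n}. xs ! k} = {k\<in>{..<n-1}. xs ! k \<noteq> xs ! (n-1)}"
      using below_n by blast
    then show ?thesis
      using False by (simp add: weight_def)
  qed
qed

lemma card_disagreements_with_last:
  assumes "2 \<le> n"
  shows "card {k\<in>{..<n-1}. xs ! k \<noteq> xs ! (n-1)}
           = logical_weight n xs + (if xs ! 0 \<noteq> xs ! (n-1) then 1 else 0)"
proof (cases "xs ! 0 \<noteq> xs ! (n-1)")
  case True
  then have "{k\<in>{..<n-1}. xs ! k \<noteq> xs ! (n-1)} = insert 0 {k\<in>{1..<n-1}. xs ! k \<noteq> xs ! (n-1)}"
    using assms by auto
  moreover have "finite {k\<in>{1..<n-1}. xs ! k \<noteq> xs ! (n-1)}"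
    by simp
  ultimately show ?thesis
    using True by (simp add: logical_weight_def)
next
  case False
  then have "{k\<in>{..<n-1}. xs ! k \<noteq> xs ! (n-1)} = {k\<in>{1..<n-1}. xs ! k \<noteq> xs ! (n-1)}"
    using not_less_eq_eq by fastforce
  then show ?thesis
    using False by (simp add: logical_weight_def)
qed

lemma i_power_complement:
  assumes "even n" "even M" "M \<le> n"
  shows "(if n mod 4 = 0 then 1 else -1) * \<i> ^ (n - M) = \<i> ^ M"
proof -
  let ?corr = "if n mod 4 = 0 then 1 else -1 :: complex"
  have square: "\<i> ^ M * \<i> ^ M = 1"
    using assms(2) by (auto elim!: evenE simp flip: power_add simp: power_mult)
  have split: "\<i> ^ n = \<i> ^ (n - M) * \<i> ^ M"
    using assms(3) by (simp flip: power_add)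
  have corr: "\<i> ^ n * ?corr = 1"
    using assms(1) by (auto elim!: evenE simp: power_mult minus_one_power_iff) presburger+
  have "?corr * \<i> ^ (n - M) = ?corr * \<i> ^ (n - M) * (\<i> ^ M * \<i> ^ M)"
    by (simp add: square)
  also have "\<dots> = (\<i> ^ n * ?corr) * \<i> ^ M"
    by (simp add: split ac_simps)
  also have "\<dots> = \<i> ^ M"
    by (simp add: corr)
  finally show ?thesis .
qed

text \<open>M counts the bits that differ from the last one, qubit 0 included. It is even
  (the code is supported on even weight) and exceeds the logical weight by at most one,
  hence it is the logical weight rounded up to an even number. When the last bit is set the
  weight is n - M, and the extra factor i^n, which is -1 exactly when 4 does not divide n,
  is cancelled by the correction Z on the last qubit.\<close>

lemma opV_phase:
  assumes "even n" "2 \<le> n" "even (weight n xs)"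
  shows "(if n mod 4 = 0 then 1 else if xs ! (n-1) then -1 else 1) * \<i> ^ weight n xs
           = (-1) ^ (Suc (logical_weight n xs) choose 2)"
proof -
  define M where "M = card {k\<in>{..<n-1}. xs ! k \<noteq> xs ! (n-1)}"
  have "M \<le> n"
  proof -
    have "M \<le> card {..<n-1}"
      unfolding M_def by (rule card_mono) auto
    then show ?thesis
      by simp
  qed
  have weight: "weight n xs = (if xs ! (n-1) then n - M else M)"
    using weight_via_last_bit[of n xs] assms(2) unfolding M_def by simp
  have "even M"
    using weight assms(1,3) \<open>M \<le> n\<close> by (cases "xs ! (n-1)") (simp_all add: even_diff_nat)
  moreover have "M = logical_weight n xs + (if xs ! 0 \<noteq> xs ! (n-1) then 1 else 0)"
    unfolding M_def using assms(2) by (rule card_disagreements_with_last)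
  ultimately have "M = logical_weight n xs + logical_weight n xs mod 2"
    by (cases "xs ! 0 \<noteq> xs ! (n-1)") (simp_all add: odd_iff_mod_2_eq_one)
  then have iM: "\<i> ^ M = (-1) ^ (Suc (logical_weight n xs) choose 2)"
    by (simp add: i_power_round_up_even)
  show ?thesis
  proof (cases "xs ! (n-1)")
    case True
    then show ?thesis
      using i_power_complement[OF assms(1) \<open>even M\<close> \<open>M \<le> n\<close>]
      by (simp only: True weight iM if_True)
  qed (simp add: weight iM)
qed

lemma app_opV_code_space:
  assumes "even n" "2 \<le> n" "\<psi> \<in> code_space n" "length xs = n"
  shows "app n (opV n) \<psi> xs = \<omega> ^ n * (-1) ^ (Suc (logical_weight n xs) choose 2) * \<psi> xs"
proof -
  have code: "\<psi> (map Not xs) = \<psi> xs" "odd (weight n xs) \<Longrightarrow> \<psi> xs = 0"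
    using assms(3,4) by (auto simp: code_space_iff)
  have "app n (opV n) \<psi> xs
          = (if n mod 4 = 0 then 1 else if xs ! (n-1) then -1 else 1)
            * (\<omega> ^ n * \<i> ^ weight n xs * \<psi> xs)"
    using assms(2,4)
    by (simp add: opV_def app_tensor_gateG code app_mmul_diagonal_op diagonal_op_on_qubit_pZ
        on_qubit_pZ_diagonal_entry)
  then show ?thesis
    using code(2) opV_phase[OF assms(1,2)] by (cases "even (weight n xs)") (simp_all add: ac_simps)
qed

theorem mainTheorem4:
  fixes n :: nat
  assumes "even n" and "n \<ge> 4"
  shows "(\<forall>\<psi>\<in>code_space n. app n (opV n) \<psi> \<in> code_space n)
       \<and> (\<exists>c P. cmod c = 1 \<and> P \<in> logical_paulis n \<and>
            (\<forall>\<psi>\<in>code_space n.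
               app n (opV n) \<psi> = (\<lambda>xs. c * app n (mmul n P (allLogCZ n)) \<psi> xs)))"
proof -
  let ?phase = "\<lambda>xs. (-1 :: complex) ^ (Suc (logical_weight n xs) choose 2)"
  have V: "app n (opV n) \<psi> xs = \<omega> ^ n * ?phase xs * \<psi> xs"
    if "\<psi> \<in> code_space n" "length xs = n" for \<psi> xs
    using app_opV_code_space[OF assms(1) _ that] assms(2) by simp
  have "app n (opV n) \<psi> \<in> code_space n" if "\<psi> \<in> code_space n" for \<psi>
    by (rule code_space_flip_invariant_scaling[OF that, where f = "\<lambda>xs. \<omega> ^ n * ?phase xs"])
      (simp_all add: V that logical_weight_map_Not)
  moreover have "app n (opV n) \<psi> = (\<lambda>xs. \<omega> ^ n * app n (mmul n (allLogZ n) (allLogCZ n)) \<psi> xs)"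
    if "\<psi> \<in> code_space n" for \<psi>
  proof
    fix xs
    show "app n (opV n) \<psi> xs = \<omega> ^ n * app n (mmul n (allLogZ n) (allLogCZ n)) \<psi> xs"
      by (cases "length xs = n") (simp_all add: V that app_allLogZ_allLogCZ ac_simps)
  qed
  moreover have "cmod (\<omega> ^ n) = 1"
    by (simp add: norm_power)
  ultimately show ?thesis
    using allLogZ_in_logical_paulis by blast
qed

end
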